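(* Let $J_{\mathrm{dual}}$, $H$, $W$ be as in the context. Assume that the set $\Gamma_+^*$ of minimizers of $J_{\mathrm{dual}}$ is nonempty, and let $\lambda^*\in\Gamma_+^*$. Let $\{\lambda^k\}$ be generated by the BSUM iteration described in the context, from a starting point $\lambda^0$ with $J_{\mathrm{dual}}(\lambda^0)<\infty$. Define $\mathcal F=\{\lambda:J_{\mathrm{dual}}(\lambda)\le J_{\mathrm{dual}}(\lambda^0)\}$ and $\mathcal R=\sup_{\lambda\in\mathcal F,\ \lambda'\in\Gamma_+^*}\|\lambda-\lambda'\|$, and assume $\mathcal R<\infty$. Let $\sigma=1/(9\|H\|\mathcal R^2)$ and $c=\max\{4\sigma-2,\ J_{\mathrm{dual}}(\lambda^0)-J_{\mathrm{dual}}(\lambda^* ),\ 2\}$. Then $J_{\mathrm{dual}}(\lambda^k)-J_{\mathrm{dual}}(\lambda^* )\le \frac{c}{\sigma}\cdot\frac1k$ for all $k\ge1$.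
   Context: $\Gamma_+^k=\{\mathrm{vec}(X):X\in\mathbb{R}^{k\times k}\text{ symmetric positive semidefinite}\}\subset\mathbb{R}^{k^2}$. $I_C$ denotes the indicator function of $C$, and $\Pi_C$ denotes Euclidean projection onto $C$. $\lambda=(\lambda_{\hat Q},\lambda_{\hat P},\lambda_{\hat R})\in\mathbb{R}^{n^2}\times\mathbb{R}^{n^2}\times\mathbb{R}^{m^2}$. $H$ is symmetric positive semidefinite, partitioned conformally into blocks $H_{ij}$ with $i,j\in\{Q,P,R\}$ and $H_{ji}=H_{ij}^\top$. (In the paper $H=U(\Omega^\top\Omega)^\dagger U^\top$.) $W=[0_{1\times n^2},\mathrm{vec}(\epsilon I_n)^\top,\mathrm{vec}(\epsilon I_m)^\top]^\top$ with $\epsilon>0$. The objective is $J_{\mathrm{dual}}(\lambda)=\tfrac14\lambda^\top H\lambda+\lambda^\top W+I_{\Gamma_+^n}(\lambda_{\hat Q})+I_{\Gamma_+^n}(\lambda_{\hat P})+I_{\Gamma_+^m}(\lambda_{\hat R})$. $\|H\|$ is the spectral norm. BSUM iteration: let $\alpha=\lambda_{\max}(H_{QQ})$, $\beta=\lambda_{\max}(H_{PP})$, $\gamma=\lambda_{\max}(H_{RR})$, all assumed positive. The blocks are updated cyclically. Each block is updated by minimizing $J_{\mathrm{dual}}$ in that block, with the other blocks fixed at their most recent values, plus the proximal term $\tfrac12\|\lambda_i-\lambda_i^k\|^2_{S_i}$, where $S_{\hat Q}=\alpha I-\tfrac12H_{QQ}$, $S_{\hat P}=\beta I-\tfrac12H_{PP}$,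 $S_{\hat R}=\gamma I-\tfrac12H_{RR}$. Explicitly: - $\lambda_{\hat Q}^{k+1}=\Pi_{\Gamma_+^n}\big(\lambda_{\hat Q}^k-\tfrac1{2\alpha}(H_{QQ}\lambda_{\hat Q}^k+H_{QP}\lambda_{\hat P}^k+H_{QR}\lambda_{\hat R}^k)\big)$; - $\lambda_{\hat P}^{k+1}=\Pi_{\Gamma_+^n}\big(\lambda_{\hat P}^k-\tfrac1{2\beta}(H_{PQ}\lambda_{\hat Q}^{k+1}+H_{PP}\lambda_{\hat P}^k+H_{PR}\lambda_{\hat R}^k)-\tfrac1\beta\mathrm{vec}(\epsilon I_n)\big)$; - $\lambda_{\hat R}^{k+1}=\Pi_{\Gamma_+^m}\big(\lambda_{\hat R}^k-\tfrac1{2\gamma}(H_{RQ}\lambda_{\hat Q}^{k+1}+H_{RP}\lambda_{\hat P}^{k+1}+H_{RR}\lambda_{\hat R}^k)-\tfrac1\gamma\mathrm{vec}(\epsilon I_m)\big)$. *)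

theory Defs
  imports "HOL-Analysis.Analysis"
begin

text \<open>The dual variable lambda = (lambda_Q, lambda_P, lambda_R) is one real vector indexed by
  the disjoint union of the index sets of the three blocks; block entries are indexed by
  matrix positions (i,j), which is vec(.) up to a fixed enumeration of positions.\<close>

type_synonym ('n,'m) bidx = "('n \<times> 'n) + (('n \<times> 'n) + ('m \<times> 'm))"

definition vecm :: "real^('k::finite)^'k \<Rightarrow> real^('k \<times> 'k)" where
  "vecm X = (\<chi> p. X $ fst p $ snd p)"

definition psd_mat :: "real^('k::finite)^'k \<Rightarrow> bool" where
  "psd_mat X \<longleftrightarrow> transpose X = X \<and> (\<forall>v. 0 \<le> v \<bullet> (X *v v))"

definition Gamma_plus :: "(real^(('k::finite) \<times> 'k)) set" where
  "Gamma_plus = {vecm X | X. psd_mat X}"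

definition lambda_max :: "real^('k::finite)^'k \<Rightarrow> real" where
  "lambda_max A = Max {\<mu>. \<exists>v. v \<noteq> 0 \<and> A *v v = \<mu> *\<^sub>R v}"

definition iQ :: "'n \<times> 'n \<Rightarrow> ('n,'m) bidx" where "iQ = Inl"
definition iP :: "'n \<times> 'n \<Rightarrow> ('n,'m) bidx" where "iP = Inr \<circ> Inl"
definition iR :: "'m \<times> 'm \<Rightarrow> ('n,'m) bidx" where "iR = Inr \<circ> Inr"

definition blk :: "('a::finite \<Rightarrow> 'i::finite) \<Rightarrow> real^'i \<Rightarrow> real^'a" where
  "blk f l = (\<chi> p. l $ f p)"

definition Hblk :: "('a::finite \<Rightarrow> 'i::finite) \<Rightarrow> ('b::finite \<Rightarrow> 'i) \<Rightarrow> real^'i^'i \<Rightarrow> real^'b^'a" where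
  "Hblk f g H = (\<chi> p q. H $ f p $ g q)"

definition join :: "real^('n::finite \<times> 'n) \<Rightarrow> real^('n \<times> 'n) \<Rightarrow> real^('m::finite \<times> 'm) \<Rightarrow> real^(('n,'m) bidx)" where
  "join Q P R = (\<chi> k. case k of Inl p \<Rightarrow> Q $ p | Inr (Inl p) \<Rightarrow> P $ p | Inr (Inr p) \<Rightarrow> R $ p)"

definition Wvec :: "real \<Rightarrow> real^(('n::finite,'m::finite) bidx)" where
  "Wvec eps = join 0 (vecm (eps *\<^sub>R mat 1)) (vecm (eps *\<^sub>R mat 1))"

definition J_dual :: "real^(('n::finite,'m::finite) bidx)^(('n,'m) bidx) \<Rightarrow> real
    \<Rightarrow> real^(('n,'m) bidx) \<Rightarrow> ereal" where
  "J_dual H eps l =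
    (if blk iQ l \<in> Gamma_plus \<and> blk iP l \<in> Gamma_plus \<and> blk iR l \<in> Gamma_plus
     then ereal ((1/4) * (l \<bullet> (H *v l)) + l \<bullet> Wvec eps) else \<infinity>)"

definition dual_minimizers :: "real^(('n::finite,'m::finite) bidx)^(('n,'m) bidx) \<Rightarrow> real
    \<Rightarrow> (real^(('n,'m) bidx)) set" where
  "dual_minimizers H eps = {l. \<forall>l'. J_dual H eps l \<le> J_dual H eps l'}"

definition bsum_step :: "real^(('n::finite,'m::finite) bidx)^(('n,'m) bidx) \<Rightarrow> real
    \<Rightarrow> real^(('n,'m) bidx) \<Rightarrow> real^(('n,'m) bidx)" where
  "bsum_step H eps l =
    (let \<alpha> = lambda_max (Hblk iQ iQ H);
         \<beta> = lambda_max (Hblk iP iP H);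
         \<gamma> = lambda_max (Hblk iR iR H);
         Q = blk iQ l; P = blk iP l; R = blk iR l;
         Q' = closest_point Gamma_plus
                (Q - (1 / (2 * \<alpha>)) *\<^sub>R (Hblk iQ iQ H *v Q + Hblk iQ iP H *v P + Hblk iQ iR H *v R));
         P' = closest_point Gamma_plus
                (P - (1 / (2 * \<beta>)) *\<^sub>R (Hblk iP iQ H *v Q' + Hblk iP iP H *v P + Hblk iP iR H *v R)
                   - (1 / \<beta>) *\<^sub>R vecm (eps *\<^sub>R mat 1));
         R' = closest_point Gamma_plus
                (R - (1 / (2 * \<gamma>)) *\<^sub>R (Hblk iR iQ H *v Q' + Hblk iR iP H *v P' + Hblk iR iR H *v R)
                   - (1 / \<gamma>) *\<^sub>R vecm (eps *\<^sub>R mat 1))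
     in join Q' P' R')"

end

theory Submission
  imports Defs
begin

text \<open>Because \<open>S\<^sub>Q = \<alpha> I - H\<^sub>Q\<^sub>Q/2\<close> etc., a BSUM sweep is a cyclic sweep of projected
  gradient steps on \<open>f(\<lambda>) = \<lambda>\<^sup>T H \<lambda>/4 + \<lambda>\<^sup>T W\<close> over the three blocks, with step sizes \<open>1/\<alpha>\<close>,
  \<open>1/\<beta>\<close>, \<open>1/\<gamma>\<close>. Since \<open>\<alpha>\<close> dominates the curvature \<open>H\<^sub>Q\<^sub>Q/4\<close> of \<open>f\<close> along its block, each
  step decreases \<open>f\<close> by \<open>3/4\<close> of the weighted squared step \<open>E\<close>. Convexity, the variational
  inequalities of the three projections and AM-GM bound the optimality gap \<open>\<Delta>'\<close> of the new
  iterate by \<open>5/4 (t \<parallel>H\<parallel> \<R>\<^sup>2 + E / t)\<close> for every \<open>t > 0\<close>; the best \<open>t\<close> gives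
  \<open>\<Delta>'\<^sup>2 \<le> 9 \<parallel>H\<parallel> \<R>\<^sup>2 (\<Delta> - \<Delta>')\<close>, and this recursion forces \<open>\<Delta>\<^sub>k = O(1/k)\<close>.\<close>

section \<open>Largest eigenvalue of a symmetric matrix\<close>

lemma symmetric_inner_mult_commute:
  fixes A :: "real^'k^'k"
  assumes "transpose A = A"
  shows "x \<bullet> (A *v y) = y \<bullet> (A *v x)"
  by (metis assms dot_lmul_matrix inner_commute vector_transpose_matrix)

lemma quadratic_form_add_scaleR:
  fixes A :: "real^'k^'k"
  assumes "transpose A = A"
  shows "(v + t *\<^sub>R w) \<bullet> (A *v (v + t *\<^sub>R w)) =
    v \<bullet> (A *v v) + 2 * t * (w \<bullet> (A *v v)) + t\<^sup>2 * (w \<bullet> (A *v w))"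
  using symmetric_inner_mult_commute[OF assms, of v w]
  by (simp add: matrix_vector_right_distrib matrix_vector_mult_scaleR inner_add_left inner_add_right
      power2_eq_square algebra_simps)

lemma psd_quadratic_form_eq_0_imp_eq_0:
  fixes M :: "real^'k^'k"
  assumes sym: "transpose M = M" and psd: "\<forall>x. 0 \<le> x \<bullet> (M *v x)" and v: "v \<bullet> (M *v v) = 0"
  shows "M *v v = 0"
proof (rule ccontr)
  assume "M *v v \<noteq> 0"
  define w where "w = M *v v"
  define c where "c = w \<bullet> w"
  define P where "P = w \<bullet> (M *v w)"
  define t where "t = - c / (P + 1)"
  have "c > 0" "P \<ge> 0" using \<open>M *v v \<noteq> 0\<close> psd by (simp_all add: c_def P_def w_def)
  have "0 \<le> (v + t *\<^sub>R w) \<bullet> (M *v (v + t *\<^sub>R w))" using psd by blast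
  also have "\<dots> = t * (2 * c + t * P)"
    using v unfolding quadratic_form_add_scaleR[OF sym] w_def[symmetric]
    by (simp add: c_def P_def power2_eq_square algebra_simps)
  also have "\<dots> < 0"
  proof -
    have "t * P \<ge> - c" using \<open>c > 0\<close> \<open>P \<ge> 0\<close> by (simp add: t_def field_simps)
    then have "2 * c + t * P > 0" using \<open>c > 0\<close> by linarith
    moreover have "t < 0" using \<open>c > 0\<close> \<open>P \<ge> 0\<close> by (simp add: t_def)
    ultimately show ?thesis by (simp add: mult_neg_pos)
  qed
  finally show False by simp
qed

lemma finite_eigenvalues_symmetric:
  fixes A :: "real^'k^'k"
  assumes sym: "transpose A = A"
  shows "finite {\<mu>. \<exists>v. v \<noteq> 0 \<and> A *v v = \<mu> *\<^sub>R v}"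
proof -
  define ES where "ES = {\<mu>. \<exists>v. v \<noteq> 0 \<and> A *v v = \<mu> *\<^sub>R v}"
  define ev where "ev \<mu> = (SOME u. u \<noteq> 0 \<and> A *v u = \<mu> *\<^sub>R u)" for \<mu>
  have ev: "ev \<mu> \<noteq> 0" "A *v ev \<mu> = \<mu> *\<^sub>R ev \<mu>" if "\<mu> \<in> ES" for \<mu>
    using someI_ex[OF that[unfolded ES_def mem_Collect_eq]] by (simp_all add: ev_def)
  have inj: "inj_on ev ES"
  proof (rule inj_onI)
    fix a b assume ab: "a \<in> ES" "b \<in> ES" "ev a = ev b"
    have "a *\<^sub>R ev a = A *v ev b" using ev(2)[OF ab(1)] ab(3) by simp
    also have "\<dots> = b *\<^sub>R ev a" using ev(2)[OF ab(2)] ab(3) by simp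
    finally show "a = b" using ev(1)[OF ab(1)] by simp
  qed
  have "pairwise orthogonal (ev ` ES)"
  proof (clarsimp simp: pairwise_def)
    fix a b assume ab: "a \<in> ES" "b \<in> ES" "ev a \<noteq> ev b"
    have "a * (ev a \<bullet> ev b) = ev b \<bullet> (A *v ev a)" using ev(2)[OF ab(1)] by (simp add: inner_commute)
    also have "\<dots> = ev a \<bullet> (A *v ev b)" by (rule symmetric_inner_mult_commute[OF sym])
    also have "\<dots> = b * (ev a \<bullet> ev b)" using ev(2)[OF ab(2)] by simp
    finally show "orthogonal (ev a) (ev b)" using ab(3) by (auto simp: orthogonal_def)
  qed
  moreover have "0 \<notin> ev ` ES" using ev(1) by auto
  ultimately have "finite (ev ` ES)"
    using pairwise_orthogonal_independent finiteI_independent by blast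
  then show ?thesis using inj finite_imageD unfolding ES_def by blast
qed

text \<open>The maximum of the Rayleigh quotient is attained on the unit sphere, and a maximiser
  is an eigenvector because \<open>\<mu> I - A\<close> is positive semidefinite and vanishes on it.\<close>
lemma symmetric_max_rayleigh_eigenvector:
  fixes A :: "real^'k^'k"
  assumes sym: "transpose A = A"
  obtains v \<mu> where "v \<noteq> 0" "A *v v = \<mu> *\<^sub>R v" "\<And>x. x \<bullet> (A *v x) \<le> \<mu> * (x \<bullet> x)"
proof -
  define q where "q x = x \<bullet> (A *v x)" for x :: "real^'k"
  have cont: "continuous_on (sphere 0 1) q"
    unfolding q_def by (intro continuous_intros linear_continuous_on bounded_linear_inner_right)
       (simp add: linear_conv_bounded_linear)
  obtain v where v: "v \<in> sphere 0 1" and vmax: "\<forall>y\<in>sphere 0 1. q y \<le> q v"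
    using continuous_attains_sup[OF compact_sphere _ cont] by auto
  have rayleigh: "q x \<le> q v * (x \<bullet> x)" for x
  proof (cases "x = 0")
    case False
    then have "q ((1 / norm x) *\<^sub>R x) \<le> q v" using vmax by simp
    then show ?thesis using False
      by (simp add: q_def matrix_vector_mult_scaleR dot_square_norm power2_eq_square
          divide_le_eq mult.commute)
  qed (simp add: q_def)
  define M where "M = q v *\<^sub>R mat 1 - A"
  have M_quad: "x \<bullet> (M *v x) = q v * (x \<bullet> x) - q x" for x
    by (simp add: M_def q_def matrix_vector_mult_diff_rdistrib inner_diff_right
        flip: scaleR_matrix_vector_assoc)
  have "transpose (B - A) = transpose B - transpose A" for B :: "real^'k^'k"
    by (simp add: transpose_def vec_eq_iff)
  then have "transpose M = M" using sym by (simp add: M_def transpose_scalar)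
  moreover have "\<forall>x. 0 \<le> x \<bullet> (M *v x)" using rayleigh by (simp add: M_quad)
  moreover have "v \<bullet> (M *v v) = 0" using v by (simp add: M_quad dot_square_norm)
  ultimately have "M *v v = 0" by (rule psd_quadratic_form_eq_0_imp_eq_0)
  then have eigen: "A *v v = q v *\<^sub>R v"
    by (simp add: M_def matrix_vector_mult_diff_rdistrib flip: scaleR_matrix_vector_assoc)
  have "v \<noteq> 0" using v by auto
  from this eigen rayleigh show ?thesis unfolding q_def by (rule that)
qed

lemma lambda_max_symmetric:
  fixes A :: "real^'k^'k"
  assumes sym: "transpose A = A"
  shows lambda_max_rayleigh: "x \<bullet> (A *v x) \<le> lambda_max A * (x \<bullet> x)"
    and lambda_max_eigenvector: "\<exists>v. v \<noteq> 0 \<and> A *v v = lambda_max A *\<^sub>R v"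
proof -
  obtain v \<mu> where v: "v \<noteq> 0" "A *v v = \<mu> *\<^sub>R v" and rayleigh: "\<And>x. x \<bullet> (A *v x) \<le> \<mu> * (x \<bullet> x)"
    using symmetric_max_rayleigh_eigenvector[OF sym] by metis
  have "\<nu> \<le> \<mu>" if "u \<noteq> 0" "A *v u = \<nu> *\<^sub>R u" for u \<nu>
    using rayleigh[of u] that by (simp add: mult_le_cancel_right)
  then have "lambda_max A = \<mu>"
    unfolding lambda_max_def using v by (intro Max_eqI finite_eigenvalues_symmetric[OF sym]) auto
  then show "x \<bullet> (A *v x) \<le> lambda_max A * (x \<bullet> x)" "\<exists>v. v \<noteq> 0 \<and> A *v v = lambda_max A *\<^sub>R v"
    using rayleigh v by auto
qed

lemma lambda_max_le_of_isometric_embedding: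
  fixes A :: "real^'k^'k" and H :: "real^'i^'i" and E :: "real^'k \<Rightarrow> real^'i"
  assumes "transpose A = A"
    and "\<And>x. E x \<bullet> (H *v E x) = x \<bullet> (A *v x)" and "\<And>x. E x \<bullet> E x = x \<bullet> x"
    and "\<And>x. x \<bullet> (H *v x) \<le> L * (x \<bullet> x)"
  shows "lambda_max A \<le> L"
proof -
  obtain v where v: "v \<noteq> 0" "A *v v = lambda_max A *\<^sub>R v"
    using lambda_max_eigenvector[OF assms(1)] by blast
  have "lambda_max A * (v \<bullet> v) = E v \<bullet> (H *v E v)" using v assms(2) by simp
  also have "\<dots> \<le> L * (v \<bullet> v)" using assms(3,4) by metis
  finally show ?thesis using v(1) by (simp add: mult_le_cancel_right)
qed

lemma inner_le_onorm:
  fixes f :: "'a::real_inner \<Rightarrow> 'a"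
  assumes "bounded_linear f"
  shows "x \<bullet> f x \<le> onorm f * (x \<bullet> x)"
proof -
  have "x \<bullet> f x \<le> norm x * norm (f x)" using Cauchy_Schwarz_ineq2[of x "f x"] by linarith
  also have "\<dots> \<le> norm x * (onorm f * norm x)" by (intro mult_left_mono onorm[OF assms]) simp
  finally show ?thesis by (simp add: dot_square_norm power2_eq_square mult.commute mult.left_commute)
qed

section \<open>The positive semidefinite cone\<close>

lemma quadratic_form_eq_inner_vecm:
  fixes X :: "real^'k^'k"
  shows "v \<bullet> (X *v v) = (\<chi> p. v $ fst p * v $ snd p) \<bullet> vecm X"
proof -
  have "v \<bullet> (X *v v) = (\<Sum>i\<in>UNIV. \<Sum>j\<in>UNIV. v $ i * v $ j * X $ i $ j)"
    by (simp add: inner_vec_def matrix_vector_mult_def sum_distrib_left algebra_simps)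
  also have "\<dots> = (\<Sum>p\<in>UNIV \<times> UNIV. v $ fst p * v $ snd p * X $ fst p $ snd p)"
    by (subst sum.cartesian_product) (simp add: case_prod_beta)
  also have "\<dots> = (\<chi> p. v $ fst p * v $ snd p) \<bullet> vecm X"
    by (simp add: inner_vec_def vecm_def UNIV_Times_UNIV)
  finally show ?thesis .
qed

lemma Gamma_plus_eq_Inter:
  "(Gamma_plus :: (real^('k::finite \<times> 'k)) set) =
     (\<Inter>p. {l. (axis p 1 - axis (snd p, fst p) (1::real)) \<bullet> l = 0}) \<inter>
     (\<Inter>v::real^'k. {l. (\<chi> p. v $ fst p * v $ snd p) \<bullet> l \<ge> 0})"
proof -
  have vecm_iff: "l = vecm X \<longleftrightarrow> X = (\<chi> i j. l $ (i, j))" for X and l :: "real^('k \<times> 'k)"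
    by (auto simp: vecm_def vec_eq_iff)
  have "l \<in> Gamma_plus \<longleftrightarrow> psd_mat (\<chi> i j. l $ (i, j))" for l :: "real^('k \<times> 'k)"
    by (auto simp: Gamma_plus_def vecm_iff)
  moreover have "transpose (\<chi> i j. l $ (i, j)) = (\<chi> i j. l $ (i, j)) \<longleftrightarrow>
      (\<forall>p. (axis p 1 - axis (snd p, fst p) (1::real)) \<bullet> l = 0)" for l :: "real^('k \<times> 'k)"
    by (auto simp: transpose_def vec_eq_iff inner_diff_left inner_axis')
  moreover have "v \<bullet> ((\<chi> i j. l $ (i, j)) *v v) = (\<chi> p. v $ fst p * v $ snd p) \<bullet> l"
    for v :: "real^'k" and l :: "real^('k \<times> 'k)"
    using quadratic_form_eq_inner_vecm vecm_iff by metis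
  ultimately show ?thesis by (auto simp: psd_mat_def)
qed

lemma Gamma_plus_closed: "closed (Gamma_plus :: (real^('k::finite \<times> 'k)) set)"
  unfolding Gamma_plus_eq_Inter
  by (intro closed_Int closed_INT ballI closed_hyperplane closed_halfspace_ge)

lemma Gamma_plus_convex: "convex (Gamma_plus :: (real^('k::finite \<times> 'k)) set)"
  unfolding Gamma_plus_eq_Inter
  by (intro convex_Int convex_INT convex_hyperplane convex_halfspace_ge)

lemma Gamma_plus_nonempty: "(Gamma_plus :: (real^('k::finite \<times> 'k)) set) \<noteq> {}"
proof -
  have "0 \<in> (Gamma_plus :: (real^('k \<times> 'k)) set)" unfolding Gamma_plus_eq_Inter by simp
  then show ?thesis by blast
qed

lemma sum_UNIV_Plus:
  "sum g (UNIV :: ('a::finite + 'b::finite) set) = (\<Sum>x\<in>UNIV. g (Inl x)) + (\<Sum>x\<in>UNIV. g (Inr x))"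
  using sum.Plus[of "UNIV::'a set" "UNIV::'b set" g] by (simp add: comp_def)

lemma inner_join: "join Q P R \<bullet> join Q' P' R' = Q \<bullet> Q' + P \<bullet> P' + R \<bullet> R'"
  by (simp add: inner_vec_def join_def sum_UNIV_Plus)

lemma blk_join [simp]:
  "blk iQ (join Q P R) = Q" "blk iP (join Q P R) = P" "blk iR (join Q P R) = R"
  by (simp_all add: blk_def join_def iQ_def iP_def iR_def)

lemma join_blk: "join (blk iQ l) (blk iP l) (blk iR l) = l"
  by (auto simp: vec_eq_iff join_def blk_def iQ_def iP_def iR_def split: sum.split)

lemma blk_add: "blk f (x + y) = blk f x + blk f y"
  and blk_diff: "blk f (x - y) = blk f x - blk f y"
  and blk_scaleR: "blk f (c *\<^sub>R x) = c *\<^sub>R blk f x"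
  by (simp_all add: blk_def vec_eq_iff)

lemma join_add: "join Q P R + join Q' P' R' = join (Q + Q') (P + P') (R + R')"
  by (auto simp: vec_eq_iff join_def split: sum.split)

lemma diff_eq_join_blk:
  "x - y = join (blk iQ x - blk iQ y) (blk iP x - blk iP y) (blk iR x - blk iR y)"
  using join_blk[of "x - y"] by (simp add: blk_diff)

lemma add_join_eq: "z + join x y r = join (blk iQ z + x) (blk iP z + y) (blk iR z + r)"
proof -
  have "z + join x y r = join (blk iQ (z + join x y r)) (blk iP (z + join x y r)) (blk iR (z + join x y r))"
    by (rule join_blk[symmetric])
  then show ?thesis by (simp add: blk_add)
qed

lemma power2_norm_blocks:
  "(norm x)\<^sup>2 = (norm (blk iQ x))\<^sup>2 + (norm (blk iP x))\<^sup>2 + (norm (blk iR x))\<^sup>2"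
  using inner_join[of "blk iQ x" "blk iP x" "blk iR x" "blk iQ x" "blk iP x" "blk iR x"]
  by (simp add: join_blk power2_norm_eq_inner)

lemma matrix_vector_mult_join:
  fixes H :: "real^(('n::finite,'m::finite) bidx)^(('n,'m) bidx)"
  shows "H *v join Q P R =
    join (Hblk iQ iQ H *v Q + Hblk iQ iP H *v P + Hblk iQ iR H *v R)
         (Hblk iP iQ H *v Q + Hblk iP iP H *v P + Hblk iP iR H *v R)
         (Hblk iR iQ H *v Q + Hblk iR iP H *v P + Hblk iR iR H *v R)"
  by (auto simp: vec_eq_iff join_def matrix_vector_mult_def sum_UNIV_Plus Hblk_def iQ_def iP_def iR_def
      split: sum.split)

lemma Hblk_symmetric:
  assumes "transpose H = H"
  shows "transpose (Hblk f f H) = Hblk f f H"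
proof -
  have "H $ i $ j = H $ j $ i" for i j
    using assms by (metis transpose_def vec_lambda_beta)
  then show ?thesis by (simp add: transpose_def Hblk_def vec_eq_iff)
qed

lemma inner_join_blocks:
  "join x 0 0 \<bullet> v = x \<bullet> blk iQ v" "join 0 x 0 \<bullet> v = x \<bullet> blk iP v" "join 0 0 r \<bullet> v = r \<bullet> blk iR v"
  using inner_join[of _ _ _ "blk iQ v" "blk iP v" "blk iR v"] by (simp_all add: join_blk)

lemma quadratic_form_join_blocks:
  fixes H :: "real^(('n::finite,'m::finite) bidx)^(('n,'m) bidx)"
  shows "join x 0 0 \<bullet> (H *v join x 0 0) = x \<bullet> (Hblk iQ iQ H *v x)"
    "join 0 x 0 \<bullet> (H *v join 0 x 0) = x \<bullet> (Hblk iP iP H *v x)"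
    "join 0 0 r \<bullet> (H *v join 0 0 r) = r \<bullet> (Hblk iR iR H *v r)"
  by (simp_all add: inner_join matrix_vector_mult_join)

section \<open>Projected gradient block updates of a convex quadratic\<close>

definition qobj :: "real^'i^'i \<Rightarrow> real^'i \<Rightarrow> real^'i \<Rightarrow> real" where
  "qobj H W z = (1/4) * (z \<bullet> (H *v z)) + z \<bullet> W"

definition qgrad :: "real^'i^'i \<Rightarrow> real^'i \<Rightarrow> real^'i \<Rightarrow> real^'i" where
  "qgrad H W z = (1/2) *\<^sub>R (H *v z) + W"

lemma qobj_add:
  assumes "transpose H = H"
  shows "qobj H W (z + D) = qobj H W z + qgrad H W z \<bullet> D + (1/4) * (D \<bullet> (H *v D))"
  using symmetric_inner_mult_commute[OF assms, of z D]
  by (simp add: qobj_def qgrad_def matrix_vector_right_distrib inner_add_left inner_add_right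
      algebra_simps inner_commute)

lemma qgrad_eq_add: "qgrad H W y = qgrad H W z + (1/2) *\<^sub>R (H *v (y - z))"
  by (simp add: qgrad_def matrix_vector_mult_diff_distrib algebra_simps)

lemma qobj_diff_le_qgrad:
  assumes "transpose H = H" and "\<forall>v. 0 \<le> v \<bullet> (H *v v)"
  shows "qobj H W z - qobj H W y \<le> qgrad H W z \<bullet> (z - y)"
  using qobj_add[OF assms(1), of W z "y - z"] assms(2) by (simp add: inner_diff_right)

lemma psd_inner_le:
  fixes H :: "real^'i^'i"
  assumes sym: "transpose H = H" and psd: "\<forall>v. 0 \<le> v \<bullet> (H *v v)" and t: "t > 0"
  shows "V \<bullet> (H *v D) \<le> (t/2) * (V \<bullet> (H *v V)) + (1/(2*t)) * (D \<bullet> (H *v D))"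
proof -
  have "0 \<le> (D + (-t) *\<^sub>R V) \<bullet> (H *v (D + (-t) *\<^sub>R V))" using psd by blast
  then have "2 * t * (V \<bullet> (H *v D)) \<le> D \<bullet> (H *v D) + t\<^sup>2 * (V \<bullet> (H *v V))"
    unfolding quadratic_form_add_scaleR[OF sym] by simp
  with t show ?thesis by (simp add: field_simps power2_eq_square)
qed

lemma neg_inner_le:
  fixes d v :: "'a::real_inner"
  assumes t: "t > 0"
  shows "- (d \<bullet> v) \<le> (t/2) * (norm v)\<^sup>2 + (1/(2*t)) * (norm d)\<^sup>2"
proof -
  have "0 \<le> (norm (t *\<^sub>R v + d))\<^sup>2" by simp
  also have "\<dots> = t\<^sup>2 * (norm v)\<^sup>2 + 2 * t * (d \<bullet> v) + (norm d)\<^sup>2"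
    unfolding power2_norm_eq_inner
    by (simp add: inner_add_left inner_add_right inner_commute[of v d] power2_eq_square algebra_simps)
  finally show ?thesis using t by (simp add: field_simps power2_eq_square)
qed

definition block_target ::
    "(real^'i \<Rightarrow> real^'a) \<Rightarrow> (real^'a) set \<Rightarrow> real \<Rightarrow> (real^'i \<Rightarrow> real^'i) \<Rightarrow> real^'i \<Rightarrow> real^'a" where
  "block_target B C a g z = closest_point C (B z - (1/a) *\<^sub>R B (g z))"

definition block_update :: "(real^'a \<Rightarrow> real^'i) \<Rightarrow> (real^'i \<Rightarrow> real^'a) \<Rightarrow> (real^'a) set \<Rightarrow> real
    \<Rightarrow> (real^'i \<Rightarrow> real^'i) \<Rightarrow> real^'i \<Rightarrow> real^'i" where
  "block_update E B C a g z = z + E (block_target B C a g z - B z)"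

lemma block_update_join [simp]:
  "block_update (\<lambda>x. join x 0 0) (blk iQ) C a g z = join (block_target (blk iQ) C a g z) (blk iP z) (blk iR z)"
  "block_update (\<lambda>x. join 0 x 0) (blk iP) C a g z = join (blk iQ z) (block_target (blk iP) C a g z) (blk iR z)"
  "block_update (\<lambda>r. join 0 0 r) (blk iR) C' a g z = join (blk iQ z) (blk iP z) (block_target (blk iR) C' a g z)"
  by (simp_all add: block_update_def add_join_eq)

lemma block_target_variational:
  fixes E :: "real^'a \<Rightarrow> real^'i"
  assumes adj: "\<And>x v. E x \<bullet> v = x \<bullet> B v"
    and C: "closed C" "convex C" and y: "y \<in> C" and a: "a > 0"
  shows "g z \<bullet> E (block_target B C a g z - y)
    \<le> - a * ((block_target B C a g z - B z) \<bullet> (block_target B C a g z - y))"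
proof -
  define x' where "x' = block_target B C a g z"
  have "(B z - (1/a) *\<^sub>R B (g z) - x') \<bullet> (y - x') \<le> 0"
    unfolding x'_def block_target_def by (rule closest_point_dot[OF C(2,1) y])
  also have "(B z - (1/a) *\<^sub>R B (g z) - x') \<bullet> (y - x') =
      (1/a) * (a * ((x' - B z) \<bullet> (x' - y)) + B (g z) \<bullet> (x' - y))"
    using a by (simp add: inner_diff_left inner_diff_right inner_commute algebra_simps)
  finally have "a * ((x' - B z) \<bullet> (x' - y)) + B (g z) \<bullet> (x' - y) \<le> 0"
    using a by (simp add: divide_le_0_iff)
  moreover have "g z \<bullet> E (x' - y) = B (g z) \<bullet> (x' - y)"
    using adj[of "x' - y" "g z"] by (simp only: inner_commute)
  ultimately show ?thesis unfolding x'_def by linarith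
qed

lemma block_update_descent:
  fixes H :: "real^'i^'i" and E :: "real^'a \<Rightarrow> real^'i"
  assumes adj: "\<And>x v. E x \<bullet> v = x \<bullet> B v" and sym: "transpose H = H"
    and quad: "\<And>x. E x \<bullet> (H *v E x) \<le> a * (x \<bullet> x)"
    and C: "closed C" "convex C" and z: "B z \<in> C" and a: "a > 0"
  shows "qobj H W (block_update E B C a (qgrad H W) z)
    \<le> qobj H W z - (3/4) * a * (norm (block_target B C a (qgrad H W) z - B z))\<^sup>2"
proof -
  define d where "d = block_target B C a (qgrad H W) z - B z"
  have "qgrad H W z \<bullet> E d \<le> - a * (d \<bullet> d)"
    using block_target_variational[OF adj C z a] by (simp add: d_def)
  moreover have "E d \<bullet> (H *v E d) \<le> a * (d \<bullet> d)" by (rule quad)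
  ultimately show ?thesis
    by (simp add: block_update_def qobj_add[OF sym] power2_norm_eq_inner flip: d_def)
qed

lemma block_update_gradient_le:
  fixes E :: "real^'a \<Rightarrow> real^'i" and g :: "real^'i \<Rightarrow> real^'i" and z :: "real^'i"
  assumes adj: "\<And>x v. E x \<bullet> v = x \<bullet> B v"
    and C: "closed C" "convex C" and y: "y \<in> C" and a: "0 < a" "a \<le> L" and t: "t > 0"
  defines "x' \<equiv> block_target B C a g z"
  shows "g z \<bullet> E (x' - y) \<le> (t * L * (norm (x' - y))\<^sup>2 + a * (norm (x' - B z))\<^sup>2 / t) / 2"
proof -
  have "g z \<bullet> E (x' - y) \<le> a * (- ((x' - B z) \<bullet> (x' - y)))"
    using block_target_variational[OF adj C y a(1)] by (simp add: x'_def)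
  also have "\<dots> \<le> a * ((t/2) * (norm (x' - y))\<^sup>2 + (1/(2*t)) * (norm (x' - B z))\<^sup>2)"
    using neg_inner_le[OF t] a(1) by (intro mult_left_mono) simp_all
  also have "\<dots> \<le> L * ((t/2) * (norm (x' - y))\<^sup>2) + a * ((1/(2*t)) * (norm (x' - B z))\<^sup>2)"
    using a t by (simp add: distrib_left mult_right_mono)
  finally show ?thesis by (simp add: field_simps)
qed

text \<open>In a cyclic sweep the block \<open>i\<close> is updated with the gradient taken before the later
  blocks \<open>j \<ge> i\<close> moved; the resulting error terms are controlled by AM-GM.\<close>
lemma gauss_seidel_gradient_le:
  fixes H :: "real^'i^'i"
  assumes sym: "transpose H = H" and psd: "\<forall>v. 0 \<le> v \<bullet> (H *v v)" and t: "t > 0"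
    and g1: "g1 = g0 + (1/2) *\<^sub>R (H *v D1)" and g2: "g2 = g1 + (1/2) *\<^sub>R (H *v D2)"
    and g3: "g3 = g2 + (1/2) *\<^sub>R (H *v D3)"
    and V: "V1 \<bullet> (H *v V1) \<le> a1" "V2 \<bullet> (H *v V2) \<le> a2" "V3 \<bullet> (H *v V3) \<le> a3"
    and D: "D1 \<bullet> (H *v D1) \<le> e1" "D2 \<bullet> (H *v D2) \<le> e2" "D3 \<bullet> (H *v D3) \<le> e3"
  shows "g3 \<bullet> (V1 + V2 + V3)
    \<le> g0 \<bullet> V1 + g1 \<bullet> V2 + g2 \<bullet> V3 + (3/4) * (t * (a1 + a2 + a3) + (e1 + e2 + e3) / t)"
proof -
  define u where "u = t / 2"
  define s where "s = 1 / (2 * t)"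
  have cross: "V \<bullet> (H *v D') \<le> u * a + s * e" if "V \<bullet> (H *v V) \<le> a" "D' \<bullet> (H *v D') \<le> e" for V D' a e
  proof -
    have "V \<bullet> (H *v D') \<le> u * (V \<bullet> (H *v V)) + s * (D' \<bullet> (H *v D'))"
      unfolding u_def s_def by (rule psd_inner_le[OF sym psd t])
    also have "\<dots> \<le> u * a + s * e"
      using that t by (intro add_mono mult_left_mono) (simp_all add: u_def s_def)
    finally show ?thesis .
  qed
  have "0 \<le> a1" "0 \<le> a2" "0 \<le> a3" "0 \<le> e1" "0 \<le> e2" "0 \<le> e3"
    using psd V D by (meson order_trans)+
  then have nonneg: "0 \<le> u * a1" "0 \<le> u * a2" "0 \<le> u * a3" "0 \<le> s * e1" "0 \<le> s * e2" "0 \<le> s * e3"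
    using t by (simp_all add: u_def s_def)
  have "g3 \<bullet> (V1 + V2 + V3) = g0 \<bullet> V1 + g1 \<bullet> V2 + g2 \<bullet> V3
      + (1/2) * (V1 \<bullet> (H *v D1) + V1 \<bullet> (H *v D2) + V1 \<bullet> (H *v D3)
               + V2 \<bullet> (H *v D2) + V2 \<bullet> (H *v D3) + V3 \<bullet> (H *v D3))"
    by (simp add: g1 g2 g3 inner_add_left inner_add_right inner_commute algebra_simps)
  also have "\<dots> \<le> g0 \<bullet> V1 + g1 \<bullet> V2 + g2 \<bullet> V3
      + (1/2) * ((u * a1 + s * e1) + (u * a1 + s * e2) + (u * a1 + s * e3)
               + (u * a2 + s * e2) + (u * a2 + s * e3) + (u * a3 + s * e3))"
    using cross V D by (intro add_left_mono mult_left_mono add_mono) simp_all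
  also have "\<dots> \<le> g0 \<bullet> V1 + g1 \<bullet> V2 + g2 \<bullet> V3
      + (3/2) * (u * a1 + u * a2 + u * a3 + s * e1 + s * e2 + s * e3)"
  proof -
    have "(1/2) * ((p1 + q1) + (p1 + q2) + (p1 + q3) + (p2 + q2) + (p2 + q3) + (p3 + q3))
        \<le> (3/2) * (p1 + p2 + p3 + q1 + q2 + q3)"
      if "0 \<le> p1" "0 \<le> p2" "0 \<le> p3" "0 \<le> q1" "0 \<le> q2" "0 \<le> q3" for p1 p2 p3 q1 q2 q3 :: real
      using that by argo
    from this[OF nonneg] show ?thesis by (rule add_left_mono)
  qed
  also have "(3/2) * (u * a1 + u * a2 + u * a3 + s * e1 + s * e2 + s * e3)
      = (3/4) * (t * (a1 + a2 + a3) + (e1 + e2 + e3) / t)"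
    using t by (simp add: u_def s_def field_simps)
  finally show ?thesis .
qed

section \<open>Scalar inequalities\<close>

lemma power2_le_of_le_mult_add_divide:
  fixes D a b :: real
  assumes D: "0 \<le> D" and a: "0 \<le> a" and b: "0 \<le> b" and le: "\<And>t. t > 0 \<Longrightarrow> D \<le> a * t + b / t"
  shows "D\<^sup>2 \<le> 4 * a * b"
proof (cases "D = 0")
  case False
  then have "D > 0" using D by simp
  show ?thesis
  proof (cases "a = 0")
    case True
    have "b / D + 1 > 0" using b \<open>D > 0\<close> by (simp add: add_nonneg_pos)
    then have "D \<le> b / (b / D + 1)" using le True by simp
    then have "D * (b / D + 1) \<le> b" using b \<open>D > 0\<close> by (simp add: le_divide_eq add_nonneg_pos)
    then show ?thesis using \<open>D > 0\<close> by (simp add: distrib_left)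
  next
    case False
    then have "a > 0" using a by simp
    have "D \<le> D / 2 + 2 * a * b / D"
      using le[of "D / (2 * a)"] \<open>a > 0\<close> \<open>D > 0\<close> by (simp add: field_simps)
    then show ?thesis using \<open>D > 0\<close> by (simp add: field_simps power2_eq_square)
  qed
qed (use a b in simp)

lemma add_mult_power2_le_imp_le:
  fixes x b \<sigma> :: real
  assumes "0 \<le> \<sigma>" "0 \<le> b" "x + \<sigma> * x\<^sup>2 \<le> b + \<sigma> * b\<^sup>2"
  shows "x \<le> b"
proof (rule ccontr)
  assume "\<not> x \<le> b"
  then have "b\<^sup>2 < x\<^sup>2" using assms(2) by (intro power_strict_mono) simp_all
  then have "\<sigma> * b\<^sup>2 \<le> \<sigma> * x\<^sup>2" using assms(1) by (simp add: mult_left_mono)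
  with assms(3) \<open>\<not> x \<le> b\<close> show False by linarith
qed

lemma sublinear_rate_of_add_mult_power2_le:
  fixes D :: "nat \<Rightarrow> real"
  assumes \<sigma>: "\<sigma> > 0" and c: "2 \<le> c" "\<sigma> \<le> 1 + c" "D 0 \<le> c"
    and step: "\<And>j. D (Suc j) + \<sigma> * (D (Suc j))\<^sup>2 \<le> D j" and k: "k \<ge> 1"
  shows "D k \<le> (c / \<sigma>) * (1 / real k)"
proof -
  have "c / \<sigma> \<ge> 0" using c \<sigma> by simp
  show ?thesis
    using k
  proof (induction k rule: nat_induct_at_least)
    case base
    have "D 1 + \<sigma> * (D 1)\<^sup>2 \<le> c" using step[of 0] c(3) by simp
    also have "c = \<sigma> * (c / \<sigma>)" using \<sigma> by simp
    also have "\<dots> \<le> (1 + c) * (c / \<sigma>)" using c(2) \<open>c / \<sigma> \<ge> 0\<close> by (rule mult_right_mono)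
    also have "\<dots> = c / \<sigma> + \<sigma> * (c / \<sigma>)\<^sup>2"
    proof -
      have "\<sigma> * (c / \<sigma>)\<^sup>2 = c * (c / \<sigma>)" using \<sigma> by (simp add: power2_eq_square)
      then show ?thesis by (simp only: distrib_right mult_1_left)
    qed
    finally have "D 1 \<le> c / \<sigma>"
      by (rule add_mult_power2_le_imp_le[rotated 2]) (use \<sigma> \<open>c / \<sigma> \<ge> 0\<close> in simp_all)
    then show ?case by simp
  next
    case (Suc k)
    define n where "n = real k"
    define m where "m = n + 1"
    have "n \<ge> 1" "m > 0" using Suc.hyps by (simp_all add: n_def m_def)
    have "2 * n \<le> c * n" using c(1) \<open>n \<ge> 1\<close> by (intro mult_right_mono) simp_all
    then have "n + 1 \<le> c * n" using \<open>n \<ge> 1\<close> by linarith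
    then have "m\<^sup>2 \<le> n * (m + c)" by (simp add: m_def power2_eq_square algebra_simps)
    then have "1 / n \<le> (m + c) / m\<^sup>2"
      using \<open>n \<ge> 1\<close> \<open>m > 0\<close> by (simp add: divide_simps mult.commute)
    have "D (Suc k) + \<sigma> * (D (Suc k))\<^sup>2 \<le> (c / \<sigma>) * (1 / n)" using step[of k] Suc.IH by (simp add: n_def)
    also have "\<dots> \<le> (c / \<sigma>) * ((m + c) / m\<^sup>2)"
      using \<open>1 / n \<le> (m + c) / m\<^sup>2\<close> \<open>c / \<sigma> \<ge> 0\<close> by (rule mult_left_mono)
    also have "\<dots> = (c / \<sigma>) * (1 / m) + \<sigma> * ((c / \<sigma>) * (1 / m))\<^sup>2"
      using \<sigma> \<open>m > 0\<close> by (simp add: field_simps power2_eq_square)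
    finally have "D (Suc k) + \<sigma> * (D (Suc k))\<^sup>2 \<le> (c / \<sigma>) * (1 / m) + \<sigma> * ((c / \<sigma>) * (1 / m))\<^sup>2" .
    moreover have "0 \<le> (c / \<sigma>) * (1 / m)"
      using \<open>c / \<sigma> \<ge> 0\<close> \<open>m > 0\<close> by (intro mult_nonneg_nonneg) simp_all
    ultimately have "D (Suc k) \<le> (c / \<sigma>) * (1 / m)"
      using \<sigma> add_mult_power2_le_imp_le by (meson less_imp_le)
    then show ?case by (simp add: m_def n_def add.commute)
  qed
qed

lemma sublinear_rate_of_power2_le_decrease:
  fixes D :: "nat \<Rightarrow> real" and K :: real
  defines "\<sigma> \<equiv> 1 / K"
  defines "c \<equiv> max (max (4 * \<sigma> - 2) (D 0)) 2"
  assumes K: "K \<ge> 0"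
    and decrease: "\<And>k. (D (Suc k))\<^sup>2 \<le> K * (D k - D (Suc k))" and k: "k \<ge> 1"
  shows "D k \<le> c / \<sigma> * (1 / real k)"
proof (cases "K = 0")
  case True
  obtain j where "k = Suc j" using k by (cases k) auto
  moreover have "(D (Suc j))\<^sup>2 \<le> 0" using decrease[of j] True by simp
  ultimately show ?thesis using True by (simp add: \<sigma>_def)
next
  case False
  then have "\<sigma> > 0" using K by (simp add: \<sigma>_def)
  have step: "D (Suc j) + \<sigma> * (D (Suc j))\<^sup>2 \<le> D j" for j
  proof -
    have "\<sigma> * (D (Suc j))\<^sup>2 \<le> \<sigma> * (K * (D j - D (Suc j)))"
      using decrease \<open>\<sigma> > 0\<close> by (intro mult_left_mono) auto
    also have "\<dots> = D j - D (Suc j)" using False by (simp add: \<sigma>_def)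
    finally show ?thesis by simp
  qed
  have "2 \<le> c" "4 * \<sigma> - 2 \<le> c" "D 0 \<le> c" by (simp_all add: c_def)
  then have "\<sigma> \<le> 1 + c" by linarith
  from sublinear_rate_of_add_mult_power2_le[OF \<open>\<sigma> > 0\<close> \<open>2 \<le> c\<close> this \<open>D 0 \<le> c\<close> step k]
  show ?thesis by simp
qed

lemma le_real_of_ereal_SUP:
  assumes "(SUP x\<in>A. ereal (h x)) < \<infinity>" and "x \<in> A"
  shows "h x \<le> real_of_ereal (SUP x\<in>A. ereal (h x))"
proof -
  have "ereal (h x) \<le> (SUP x\<in>A. ereal (h x))" using assms(2) by (rule SUP_upper)
  with assms(1) show ?thesis by (cases "SUP x\<in>A. ereal (h x)") auto
qed

section \<open>The BSUM sweep\<close>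

definition dual_feasible :: "real^(('n::finite,'m::finite) bidx) \<Rightarrow> bool" where
  "dual_feasible l \<longleftrightarrow> blk iQ l \<in> Gamma_plus \<and> blk iP l \<in> Gamma_plus \<and> blk iR l \<in> Gamma_plus"

lemma J_dual_eq: "J_dual H eps l = (if dual_feasible l then ereal (qobj H (Wvec eps) l) else \<infinity>)"
  by (simp add: J_dual_def dual_feasible_def qobj_def)

locale bsum_problem =
  fixes H :: "real^(('n::finite,'m::finite) bidx)^(('n,'m) bidx)" and eps :: real
  assumes H_sym: "transpose H = H" and H_psd: "\<forall>v. 0 \<le> v \<bullet> (H *v v)"
    and alpha_pos: "lambda_max (Hblk iQ iQ H) > 0"
    and beta_pos: "lambda_max (Hblk iP iP H) > 0"
    and gamma_pos: "lambda_max (Hblk iR iR H) > 0"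
begin

abbreviation "\<alpha> \<equiv> lambda_max (Hblk iQ iQ H)"
abbreviation "\<beta> \<equiv> lambda_max (Hblk iP iP H)"
abbreviation "\<gamma> \<equiv> lambda_max (Hblk iR iR H)"
abbreviation "L \<equiv> onorm (\<lambda>x. H *v x)"
abbreviation "f \<equiv> qobj H (Wvec eps)"
abbreviation "g \<equiv> qgrad H (Wvec eps)"

abbreviation "updQ \<equiv> block_update (\<lambda>x. join x 0 0) (blk iQ) Gamma_plus \<alpha> g"
abbreviation "updP \<equiv> block_update (\<lambda>x. join 0 x 0) (blk iP) Gamma_plus \<beta> g"
abbreviation "updR \<equiv> block_update (\<lambda>r. join 0 0 r) (blk iR) Gamma_plus \<gamma> g"

lemma quadratic_form_le_L: "x \<bullet> (H *v x) \<le> L * (x \<bullet> x)"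
  by (rule inner_le_onorm) (simp add: linear_conv_bounded_linear[symmetric])

lemma block_rayleigh:
  "join x 0 0 \<bullet> (H *v join x 0 0) \<le> \<alpha> * (x \<bullet> x)"
  "join 0 x 0 \<bullet> (H *v join 0 x 0) \<le> \<beta> * (x \<bullet> x)"
  "join 0 0 r \<bullet> (H *v join 0 0 r) \<le> \<gamma> * (r \<bullet> r)"
  using lambda_max_rayleigh[OF Hblk_symmetric[OF H_sym]] by (simp_all add: quadratic_form_join_blocks)

lemma block_quadratic_forms_le:
  "join x 0 0 \<bullet> (H *v join x 0 0) \<le> L * (norm x)\<^sup>2"
  "join 0 x 0 \<bullet> (H *v join 0 x 0) \<le> L * (norm x)\<^sup>2"
  "join 0 0 r \<bullet> (H *v join 0 0 r) \<le> L * (norm r)\<^sup>2"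
  "join x 0 0 \<bullet> (H *v join x 0 0) \<le> \<alpha> * (norm x)\<^sup>2"
  "join 0 x 0 \<bullet> (H *v join 0 x 0) \<le> \<beta> * (norm x)\<^sup>2"
  "join 0 0 r \<bullet> (H *v join 0 0 r) \<le> \<gamma> * (norm r)\<^sup>2"
  using quadratic_form_le_L[of "join x 0 0"] quadratic_form_le_L[of "join 0 x 0"]
    quadratic_form_le_L[of "join 0 0 r"] block_rayleigh
  by (simp_all add: inner_join power2_norm_eq_inner)

lemma block_lambda_max_le_L: "\<alpha> \<le> L" "\<beta> \<le> L" "\<gamma> \<le> L"
  by (rule lambda_max_le_of_isometric_embedding[OF Hblk_symmetric[OF H_sym] quadratic_form_join_blocks(1)]
      lambda_max_le_of_isometric_embedding[OF Hblk_symmetric[OF H_sym] quadratic_form_join_blocks(2)]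
      lambda_max_le_of_isometric_embedding[OF Hblk_symmetric[OF H_sym] quadratic_form_join_blocks(3)];
      simp add: inner_join quadratic_form_le_L)+

lemma L_pos: "L > 0"
  using alpha_pos block_lambda_max_le_L(1) by linarith

lemma qgrad_eq_join_blocks:
  "g z = (1/2) *\<^sub>R (H *v join (blk iQ z) (blk iP z) (blk iR z)) + Wvec eps"
  by (simp add: qgrad_def join_blk)

lemma blk_qgrad:
  "blk iQ (g z) = (1/2) *\<^sub>R (Hblk iQ iQ H *v blk iQ z + Hblk iQ iP H *v blk iP z + Hblk iQ iR H *v blk iR z)"
  "blk iP (g z) = (1/2) *\<^sub>R (Hblk iP iQ H *v blk iQ z + Hblk iP iP H *v blk iP z + Hblk iP iR H *v blk iR z)
    + vecm (eps *\<^sub>R mat 1)"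
  "blk iR (g z) = (1/2) *\<^sub>R (Hblk iR iQ H *v blk iQ z + Hblk iR iP H *v blk iP z + Hblk iR iR H *v blk iR z)
    + vecm (eps *\<^sub>R mat 1)"
  unfolding qgrad_eq_join_blocks by (simp_all add: matrix_vector_mult_join Wvec_def blk_add blk_scaleR)

lemma bsum_step_eq_block_updates: "bsum_step H eps l = updR (updP (updQ l))"
  by (simp add: bsum_step_def Let_def block_target_def blk_qgrad scaleR_add_right algebra_simps)

lemma bsum_step_feasible: "dual_feasible (bsum_step H eps l)"
  by (simp add: bsum_step_def Let_def dual_feasible_def closest_point_in_set Gamma_plus_closed
      Gamma_plus_nonempty)

lemma block_updates_descent:
  "blk iQ z \<in> Gamma_plus \<Longrightarrow> f (updQ z) \<le> f z - (3/4) * \<alpha> * (norm (blk iQ (updQ z) - blk iQ z))\<^sup>2"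
  "blk iP z \<in> Gamma_plus \<Longrightarrow> f (updP z) \<le> f z - (3/4) * \<beta> * (norm (blk iP (updP z) - blk iP z))\<^sup>2"
  "blk iR z \<in> Gamma_plus \<Longrightarrow> f (updR z) \<le> f z - (3/4) * \<gamma> * (norm (blk iR (updR z) - blk iR z))\<^sup>2"
  using block_update_descent[OF inner_join_blocks(1) H_sym block_rayleigh(1)
      Gamma_plus_closed Gamma_plus_convex _ alpha_pos]
    block_update_descent[OF inner_join_blocks(2) H_sym block_rayleigh(2)
      Gamma_plus_closed Gamma_plus_convex _ beta_pos]
    block_update_descent[OF inner_join_blocks(3) H_sym block_rayleigh(3)
      Gamma_plus_closed Gamma_plus_convex _ gamma_pos]
  by simp_all

lemma block_updates_gradient_le:
  assumes "t > 0"
  shows "y \<in> Gamma_plus \<Longrightarrow> g z \<bullet> join (blk iQ (updQ z) - y) 0 0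
      \<le> (t * L * (norm (blk iQ (updQ z) - y))\<^sup>2 + \<alpha> * (norm (blk iQ (updQ z) - blk iQ z))\<^sup>2 / t) / 2"
    "y \<in> Gamma_plus \<Longrightarrow> g z \<bullet> join 0 (blk iP (updP z) - y) 0
      \<le> (t * L * (norm (blk iP (updP z) - y))\<^sup>2 + \<beta> * (norm (blk iP (updP z) - blk iP z))\<^sup>2 / t) / 2"
    "r \<in> Gamma_plus \<Longrightarrow> g z \<bullet> join 0 0 (blk iR (updR z) - r)
      \<le> (t * L * (norm (blk iR (updR z) - r))\<^sup>2 + \<gamma> * (norm (blk iR (updR z) - blk iR z))\<^sup>2 / t) / 2"
  using block_update_gradient_le[OF inner_join_blocks(1) Gamma_plus_closed Gamma_plus_convex _ alpha_pos
      block_lambda_max_le_L(1) assms]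
    block_update_gradient_le[OF inner_join_blocks(2) Gamma_plus_closed Gamma_plus_convex _ beta_pos
      block_lambda_max_le_L(2) assms]
    block_update_gradient_le[OF inner_join_blocks(3) Gamma_plus_closed Gamma_plus_convex _ gamma_pos
      block_lambda_max_le_L(3) assms]
  by simp_all

lemma bsum_step_blocks:
  "blk iQ (updQ l) = blk iQ (bsum_step H eps l)" "blk iP (updQ l) = blk iP l" "blk iR (updQ l) = blk iR l"
  "blk iQ (updP (updQ l)) = blk iQ (bsum_step H eps l)"
  "blk iP (updP (updQ l)) = blk iP (bsum_step H eps l)" "blk iR (updP (updQ l)) = blk iR l"
  by (simp_all add: bsum_step_eq_block_updates)

definition step_energy :: "real^(('n,'m) bidx) \<Rightarrow> real" where
  "step_energy l = \<alpha> * (norm (blk iQ (bsum_step H eps l - l)))\<^sup>2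
    + \<beta> * (norm (blk iP (bsum_step H eps l - l)))\<^sup>2 + \<gamma> * (norm (blk iR (bsum_step H eps l - l)))\<^sup>2"

lemma step_energy_nonneg: "0 \<le> step_energy l"
  using alpha_pos beta_pos gamma_pos by (simp add: step_energy_def)

lemma bsum_step_descent:
  assumes feasible: "dual_feasible l"
  shows "f (bsum_step H eps l) \<le> f l - (3/4) * step_energy l"
proof -
  define z1 where "z1 = updQ l"
  define z2 where "z2 = updP z1"
  define l' where "l' = bsum_step H eps l"
  have l'_eq: "l' = updR z2" by (simp add: l'_def z1_def z2_def bsum_step_eq_block_updates)
  note stages = bsum_step_blocks[of l, folded z1_def z2_def l'_def]
  have "f z1 \<le> f l - (3/4) * (\<alpha> * (norm (blk iQ (l' - l)))\<^sup>2)"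
    using block_updates_descent(1)[of l, folded z1_def] feasible stages
    by (simp add: blk_diff dual_feasible_def)
  moreover have "f z2 \<le> f z1 - (3/4) * (\<beta> * (norm (blk iP (l' - l)))\<^sup>2)"
    using block_updates_descent(2)[of z1, folded z2_def] feasible stages
    by (simp add: blk_diff dual_feasible_def)
  moreover have "f l' \<le> f z2 - (3/4) * (\<gamma> * (norm (blk iR (l' - l)))\<^sup>2)"
    using block_updates_descent(3)[of z2, folded l'_eq] feasible stages
    by (simp add: blk_diff dual_feasible_def)
  ultimately have "f l' \<le> f l - ((3/4) * (\<alpha> * (norm (blk iQ (l' - l)))\<^sup>2)
      + (3/4) * (\<beta> * (norm (blk iP (l' - l)))\<^sup>2) + (3/4) * (\<gamma> * (norm (blk iR (l' - l)))\<^sup>2))"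
    by linarith
  then show ?thesis unfolding step_energy_def l'_def[symmetric] by (simp only: distrib_left)
qed

lemma bsum_step_decreasing: "dual_feasible l \<Longrightarrow> f (bsum_step H eps l) \<le> f l"
  using bsum_step_descent[of l] step_energy_nonneg[of l] by linarith

lemma bsum_iterates:
  assumes "dual_feasible (lam 0)" and iter: "\<And>k. lam (Suc k) = bsum_step H eps (lam k)"
  shows "dual_feasible (lam k)"
    and "f (lam k) \<le> f (lam 0)"
proof -
  have feasible: "dual_feasible (lam j)" for j
    using assms by (cases j) (simp_all add: bsum_step_feasible)
  then show "dual_feasible (lam k)" .
  show "f (lam k) \<le> f (lam 0)"
  proof (induction k)
    case (Suc k)
    have "f (lam (Suc k)) \<le> f (lam k)" using bsum_step_decreasing[OF feasible[of k]] by (simp add: iter)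
    with Suc.IH show ?case by linarith
  qed simp
qed

lemma bsum_step_first_order_le:
  assumes feasible: "dual_feasible l" "dual_feasible y" and t: "t > 0"
  defines "l' \<equiv> bsum_step H eps l"
  shows "g l \<bullet> join (blk iQ (l' - y)) 0 0 + g (updQ l) \<bullet> join 0 (blk iP (l' - y)) 0
      + g (updP (updQ l)) \<bullet> join 0 0 (blk iR (l' - y))
    \<le> (t * L * (norm (l' - y))\<^sup>2 + step_energy l / t) / 2"
proof -
  define z1 where "z1 = updQ l"
  define z2 where "z2 = updP z1"
  have l'_eq: "l' = updR z2" by (simp add: l'_def z1_def z2_def bsum_step_eq_block_updates)
  note stages = bsum_step_blocks[of l, folded z1_def z2_def l'_def]
  have "g l \<bullet> join (blk iQ (l' - y)) 0 0
      \<le> (t * L * (norm (blk iQ (l' - y)))\<^sup>2 + \<alpha> * (norm (blk iQ (l' - l)))\<^sup>2 / t) / 2"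
    using block_updates_gradient_le(1)[OF t, of "blk iQ y" l, folded z1_def] feasible stages
    by (simp add: dual_feasible_def blk_diff)
  moreover have "g z1 \<bullet> join 0 (blk iP (l' - y)) 0
      \<le> (t * L * (norm (blk iP (l' - y)))\<^sup>2 + \<beta> * (norm (blk iP (l' - l)))\<^sup>2 / t) / 2"
    using block_updates_gradient_le(2)[OF t, of "blk iP y" z1, folded z2_def] feasible stages
    by (simp add: dual_feasible_def blk_diff)
  moreover have "g z2 \<bullet> join 0 0 (blk iR (l' - y))
      \<le> (t * L * (norm (blk iR (l' - y)))\<^sup>2 + \<gamma> * (norm (blk iR (l' - l)))\<^sup>2 / t) / 2"
    using block_updates_gradient_le(3)[OF t, of "blk iR y" z2, folded l'_eq] feasible stages
    by (simp add: dual_feasible_def blk_diff)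
  moreover have "(norm (l' - y))\<^sup>2 = (norm (blk iQ (l' - y)))\<^sup>2 + (norm (blk iP (l' - y)))\<^sup>2
      + (norm (blk iR (l' - y)))\<^sup>2"
    by (rule power2_norm_blocks)
  ultimately show ?thesis
    unfolding step_energy_def l'_def[symmetric] z2_def[symmetric] z1_def[symmetric]
    using t by (simp add: field_simps)
qed

lemma bsum_step_gradient_lag:
  fixes l y :: "real^(('n,'m) bidx)"
  assumes t: "t > 0"
  defines "l' \<equiv> bsum_step H eps l"
  shows "g l' \<bullet> (l' - y)
    \<le> g l \<bullet> join (blk iQ (l' - y)) 0 0 + g (updQ l) \<bullet> join 0 (blk iP (l' - y)) 0
      + g (updP (updQ l)) \<bullet> join 0 0 (blk iR (l' - y))
      + (3/4) * (t * L * (norm (l' - y))\<^sup>2 + step_energy l / t)"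
proof -
  define z1 where "z1 = updQ l"
  define z2 where "z2 = updP z1"
  note stages = bsum_step_blocks[of l, folded z1_def z2_def l'_def]
  define d1 d2 d3 where "d1 = blk iQ (l' - l)" and "d2 = blk iP (l' - l)" and "d3 = blk iR (l' - l)"
  define v1 v2 v3 where "v1 = blk iQ (l' - y)" and "v2 = blk iP (l' - y)" and "v3 = blk iR (l' - y)"
  have steps: "z1 - l = join d1 0 0" "z2 - z1 = join 0 d2 0" "l' - z2 = join 0 0 d3"
    using stages by (simp_all add: diff_eq_join_blk d1_def d2_def d3_def blk_diff)
  have "g z1 = g l + (1/2) *\<^sub>R (H *v join d1 0 0)" "g z2 = g z1 + (1/2) *\<^sub>R (H *v join 0 d2 0)"
    "g l' = g z2 + (1/2) *\<^sub>R (H *v join 0 0 d3)"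
    by (simp_all add: qgrad_eq_add[of _ _ z1 l] qgrad_eq_add[of _ _ z2 z1] qgrad_eq_add[of _ _ l' z2]
        flip: steps)
  then have "g l' \<bullet> (join v1 0 0 + join 0 v2 0 + join 0 0 v3)
      \<le> g l \<bullet> join v1 0 0 + g z1 \<bullet> join 0 v2 0 + g z2 \<bullet> join 0 0 v3
        + (3/4) * (t * (L * (norm v1)\<^sup>2 + L * (norm v2)\<^sup>2 + L * (norm v3)\<^sup>2)
                   + (\<alpha> * (norm d1)\<^sup>2 + \<beta> * (norm d2)\<^sup>2 + \<gamma> * (norm d3)\<^sup>2) / t)"
    by (rule gauss_seidel_gradient_le[OF H_sym H_psd t _ _ _ block_quadratic_forms_le])
  moreover have "l' - y = join v1 0 0 + join 0 v2 0 + join 0 0 v3"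
    by (simp add: diff_eq_join_blk join_add v1_def v2_def v3_def blk_diff)
  moreover have "(norm (l' - y))\<^sup>2 = (norm v1)\<^sup>2 + (norm v2)\<^sup>2 + (norm v3)\<^sup>2"
    unfolding v1_def v2_def v3_def by (rule power2_norm_blocks)
  ultimately show ?thesis
    unfolding step_energy_def l'_def[symmetric] z2_def[symmetric] z1_def[symmetric]
      d1_def[symmetric] d2_def[symmetric] d3_def[symmetric] v1_def[symmetric] v2_def[symmetric] v3_def[symmetric]
    by (simp add: algebra_simps)
qed

lemma bsum_step_cost_to_go:
  assumes feasible: "dual_feasible l" "dual_feasible y" and t: "t > 0"
  shows "f (bsum_step H eps l) - f y
    \<le> (5/4) * (t * L * (norm (bsum_step H eps l - y))\<^sup>2 + step_energy l / t)"
proof -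
  define l' where "l' = bsum_step H eps l"
  have "f l' - f y \<le> g l' \<bullet> (l' - y)" by (rule qobj_diff_le_qgrad[OF H_sym H_psd])
  also have "\<dots> \<le> (1/2 + 3/4) * (t * L * (norm (l' - y))\<^sup>2 + step_energy l / t)"
    using bsum_step_gradient_lag[OF t, of l y] bsum_step_first_order_le[OF feasible t]
    unfolding l'_def by (simp add: algebra_simps)
  finally show ?thesis by (simp add: l'_def)
qed

lemma bsum_step_recursion:
  assumes feasible: "dual_feasible l" "dual_feasible y"
    and y_le: "f y \<le> f (bsum_step H eps l)" and dist: "dist (bsum_step H eps l) y \<le> R"
  shows "(f (bsum_step H eps l) - f y)\<^sup>2 \<le> 9 * L * R\<^sup>2 * (f l - f (bsum_step H eps l))"
proof -
  define l' where "l' = bsum_step H eps l"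
  define E where "E = step_energy l"
  have "0 \<le> E" by (simp add: E_def step_energy_nonneg)
  have E_le: "E \<le> (4/3) * (f l - f l')" using bsum_step_descent[OF feasible(1)] by (simp add: E_def l'_def)
  have "norm (l' - y) \<le> R" using dist by (simp add: l'_def dist_norm)
  then have "(norm (l' - y))\<^sup>2 \<le> R\<^sup>2" by (rule power_mono) simp
  have "f l' - f y \<le> ((5/4) * L * R\<^sup>2) * t + ((5/4) * E) / t" if "t > 0" for t
  proof -
    have "f l' - f y \<le> (5/4) * (t * L * (norm (l' - y))\<^sup>2 + E / t)"
      using bsum_step_cost_to_go[OF feasible that] by (simp add: l'_def E_def)
    also have "\<dots> \<le> (5/4) * (t * L * R\<^sup>2 + E / t)"
      using \<open>(norm (l' - y))\<^sup>2 \<le> R\<^sup>2\<close> L_pos that by (simp add: mult_left_mono)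
    finally show ?thesis by (simp add: algebra_simps)
  qed
  then have "(f l' - f y)\<^sup>2 \<le> 4 * ((5/4) * L * R\<^sup>2) * ((5/4) * E)"
    using y_le L_pos \<open>0 \<le> E\<close> by (intro power2_le_of_le_mult_add_divide) (simp_all add: l'_def)
  also have "\<dots> = (25/4) * (L * R\<^sup>2) * E" by simp
  also have "\<dots> \<le> (25/4) * (L * R\<^sup>2) * ((4/3) * (f l - f l'))"
    using E_le L_pos by (intro mult_left_mono) simp_all
  also have "\<dots> = (25/3) * (L * R\<^sup>2) * (f l - f l')" by simp
  also have "\<dots> \<le> 9 * (L * R\<^sup>2) * (f l - f l')"
    using E_le \<open>0 \<le> E\<close> L_pos by (intro mult_right_mono) simp_all
  finally show ?thesis by (simp add: l'_def mult.assoc)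
qed

end

theorem theorem3:
  fixes H :: "real^(('n::finite,'m::finite) bidx)^(('n,'m) bidx)"
    and eps :: real
    and lam :: "nat \<Rightarrow> real^(('n,'m) bidx)"
    and lstar :: "real^(('n,'m) bidx)"
  assumes H_sym: "transpose H = H"
    and H_psd: "\<forall>v. 0 \<le> v \<bullet> (H *v v)"
    and eps_pos: "eps > 0"
    and alpha_pos: "lambda_max (Hblk iQ iQ H) > 0"
    and beta_pos: "lambda_max (Hblk iP iP H) > 0"
    and gamma_pos: "lambda_max (Hblk iR iR H) > 0"
    and lstar_min: "lstar \<in> dual_minimizers H eps"
    and init_fin: "J_dual H eps (lam 0) < \<infinity>"
    and iter: "\<forall>k. lam (Suc k) = bsum_step H eps (lam k)"
    and R_fin: "(SUP p \<in> {l. J_dual H eps l \<le> J_dual H eps (lam 0)} \<times> dual_minimizers H eps.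
                   ereal (dist (fst p) (snd p))) < \<infinity>"
  shows "let \<R> = real_of_ereal (SUP p \<in> {l. J_dual H eps l \<le> J_dual H eps (lam 0)} \<times> dual_minimizers H eps.
                   ereal (dist (fst p) (snd p)));
             \<sigma> = 1 / (9 * onorm (\<lambda>x. H *v x) * \<R>\<^sup>2);
             c = max (max (4 * \<sigma> - 2) (real_of_ereal (J_dual H eps (lam 0) - J_dual H eps lstar))) 2
         in \<forall>k\<ge>1. J_dual H eps (lam k) - J_dual H eps lstar \<le> ereal (c / \<sigma> * (1 / real k))"
proof -
  interpret bsum_problem H eps
    using H_sym H_psd alpha_pos beta_pos gamma_pos by unfold_locales
  define R where "R = real_of_ereal (SUP p \<in> {l. J_dual H eps l \<le> J_dual H eps (lam 0)} \<times> dual_minimizers H eps.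
                   ereal (dist (fst p) (snd p)))"
  define D where "D k = f (lam k) - f lstar" for k
  note J = J_dual_eq[of H eps]
  have "dual_feasible (lam 0)" using init_fin by (simp add: J split: if_splits)
  note iterates = bsum_iterates[OF this iter[rule_format]]
  have lstar_le: "J_dual H eps lstar \<le> J_dual H eps l" for l
    using lstar_min by (simp add: dual_minimizers_def)
  then have lstar_feasible: "dual_feasible lstar" and D_nonneg: "D k \<ge> 0" for k
    using lstar_le[of "lam 0"] lstar_le[of "lam k"] iterates by (auto simp: J D_def split: if_splits)
  have dist_le: "dist (lam k) lstar \<le> R" for k
  proof -
    have "(lam k, lstar) \<in> {l. J_dual H eps l \<le> J_dual H eps (lam 0)} \<times> dual_minimizers H eps"
      using iterates lstar_min by (simp add: J)
    from le_real_of_ereal_SUP[OF R_fin this] show ?thesis by (simp add: R_def)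
  qed
  have recursion: "(D (Suc k))\<^sup>2 \<le> 9 * L * R\<^sup>2 * (D k - D (Suc k))" for k
    using bsum_step_recursion[OF iterates(1) lstar_feasible] D_nonneg[of "Suc k"] dist_le[of "Suc k"] iter
    by (simp add: D_def)
  have "D k \<le> max (max (4 * (1 / (9 * L * R\<^sup>2)) - 2) (D 0)) 2 / (1 / (9 * L * R\<^sup>2)) * (1 / real k)"
    if "k \<ge> 1" for k
    by (rule sublinear_rate_of_power2_le_decrease) (use recursion that L_pos in auto)
  moreover have "J_dual H eps (lam k) - J_dual H eps lstar = ereal (D k)" for k
    using iterates(1) lstar_feasible by (simp add: J D_def)
  ultimately show ?thesis unfolding Let_def R_def[symmetric] by simp
qed

end
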